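(* Let $(\{0,1\}^{\mathbb N},\mathbb B_\Pi(\{0,1\}^{\mathbb N}),m,\sigma)$ be an ergodic Markov shift over two symbols, and let $X:\{0,1\}^{\mathbb N}\to\mathbb R$ be a lexicographic-like random variable. Then for every $d\in\mathbb N$ the ordinal partition $\mathcal P^X(d)$ is generating and has the Markov property.
   Context: Markov shift over $A=\{0,\dots,l\}$: given an $(l+1)\times(l+1)$ stochastic matrix $Q=(q_{ij})$ and a stationary probability vector $p=(p_0,\dots,p_l)$ of $Q$ with all $p_a>0$, it is the system $(A^{\mathbb N},\mathbb B_\Pi(A^{\mathbb N}),m,\sigma)$ where $A^{\mathbb N}$ is the space of one-sided sequences $s=(s_0,s_1,\dots)$, $\mathbb B_\Pi$ is the $\sigma$-algebra generated by cylinders $C_{a_0\dots a_{n-1}}=\{s: s_0=a_0,\dots,s_{n-1}=a_{n-1}\}$, $(\sigma s)_j=s_{j+1}$, and $m(C_{a_0\dots a_{n-1}})=p_{a_0}q_{a_0a_1}\cdots q_{a_{n-2}a_{n-1}}$. It is ergodic if every $B$ with $\sigma^{-1}B=B$ has $m(B)\in\{0,1\}$. Lexicographic order: $r\prec s$ iff $r_0<s_0$ or there is $k\in\mathbb N$ with $r_i=s_i$ for $i<k$ and $r_k<s_k$. An observable $X:A^{\mathbb N}\to\mathbb R$ is lexicographic-like if it is injective on a set of full $m$-measure and for all $s\in A^{\mathbb N}$ and $j,n\in\mathbb N_0$: $X(\sigma^j s)\le X(\sigma^n s)$ iff $\sigma^j s\preceq\sigma^n s$. Ordinal pattern: $(x_0,\dots,x_d)$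 has pattern $\pi=(r_0,\dots,r_d)\in\Pi_d$ (permutations of $\{0,\dots,d\}$) if $x_{r_0}\ge\dots\ge x_{r_d}$ and $r_{l-1}>r_l$ whenever $x_{r_{l-1}}=x_{r_l}$. The ordinal partition $\mathcal P^X(d)$ consists of the sets $P_\pi=\{s:(X(\sigma^d s),X(\sigma^{d-1}s),\dots,X(s))\text{ has ordinal pattern }\pi\}$, $\pi\in\Pi_d$. A finite measurable partition $\mathcal G=\{G_0,\dots,G_l\}$ is generating if for every measurable $B$ there is $A$ in the $\sigma$-algebra generated by the sets $\sigma^{-n}(G_i)$, $n\in\mathbb N_0$, with $m(A\triangle B)=0$. A finite partition $\mathcal M=\{M_0,\dots,M_l\}$ has the Markov property if for all $n\in\mathbb N$ and $i_0,\dots,i_n$ with $m(M_{i_0}\cap\sigma^{-1}M_{i_1}\cap\dots\cap\sigma^{-(n-1)}M_{i_{n-1}})>0$, $\frac{m(M_{i_0}\cap\sigma^{-1}M_{i_1}\cap\dots\cap\sigma^{-n}M_{i_n})}{m(M_{i_0}\cap\dots\cap\sigma^{-(n-1)}M_{i_{n-1}})}=\frac{m(M_{i_{n-1}}\cap\sigma^{-1}M_{i_n})}{m(M_{i_{n-1}})}$. *)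

theory Defs
  imports "HOL-Probability.Probability"
begin

definition seq_space :: "nat \<Rightarrow> (nat \<Rightarrow> nat) set" where
  "seq_space l = {s. \<forall>i. s i \<le> l}"

definition shift :: "(nat \<Rightarrow> 'a) \<Rightarrow> (nat \<Rightarrow> 'a)" where
  "shift s = (\<lambda>j. s (Suc j))"

definition cylinder :: "nat \<Rightarrow> (nat \<Rightarrow> nat) \<Rightarrow> nat \<Rightarrow> (nat \<Rightarrow> nat) set" where
  "cylinder l a n = {s \<in> seq_space l. \<forall>i<n. s i = a i}"

definition markov_shift ::
  "nat \<Rightarrow> (nat \<Rightarrow> nat \<Rightarrow> real) \<Rightarrow> (nat \<Rightarrow> real) \<Rightarrow> (nat \<Rightarrow> nat) measure \<Rightarrow> bool" where
  "markov_shift l Q p M \<longleftrightarrow>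
     (\<forall>i\<le>l. \<forall>j\<le>l. 0 \<le> Q i j) \<and>
     (\<forall>i\<le>l. (\<Sum>j\<le>l. Q i j) = 1) \<and>
     (\<forall>a\<le>l. 0 < p a) \<and>
     (\<Sum>a\<le>l. p a) = 1 \<and>
     (\<forall>j\<le>l. (\<Sum>i\<le>l. p i * Q i j) = p j) \<and>
     prob_space M \<and>
     space M = seq_space l \<and>
     sets M = sigma_sets (seq_space l) {cylinder l a n | a n. True} \<and>
     (\<forall>a n. (\<forall>i<n. a i \<le> l) \<longrightarrow> 1 \<le> n \<longrightarrow>
        measure M (cylinder l a n) = p (a 0) * (\<Prod>i<n - 1. Q (a i) (a (Suc i))))"

definition ergodic_shift :: "(nat \<Rightarrow> 'a) measure \<Rightarrow> bool" where
  "ergodic_shift M \<longleftrightarrow>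
     (\<forall>B\<in>sets M. shift -` B \<inter> space M = B \<longrightarrow> measure M B = 0 \<or> measure M B = 1)"

definition lex_less :: "(nat \<Rightarrow> nat) \<Rightarrow> (nat \<Rightarrow> nat) \<Rightarrow> bool" where
  "lex_less r s \<longleftrightarrow> (\<exists>k. (\<forall>i<k. r i = s i) \<and> r k < s k)"

definition lex_le :: "(nat \<Rightarrow> nat) \<Rightarrow> (nat \<Rightarrow> nat) \<Rightarrow> bool" where
  "lex_le r s \<longleftrightarrow> lex_less r s \<or> r = s"

definition lexicographic_like :: "(nat \<Rightarrow> nat) measure \<Rightarrow> ((nat \<Rightarrow> nat) \<Rightarrow> real) \<Rightarrow> bool" where
  "lexicographic_like M X \<longleftrightarrow>
     (\<exists>N\<in>sets M. measure M N = 1 \<and> inj_on X N) \<and>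
     (\<forall>s\<in>space M. \<forall>j n. X ((shift ^^ j) s) \<le> X ((shift ^^ n) s)
         \<longleftrightarrow> lex_le ((shift ^^ j) s) ((shift ^^ n) s))"

definition patterns :: "nat \<Rightarrow> nat list set" where
  "patterns d = {r. distinct r \<and> set r = {0..d}}"

definition has_pattern :: "(nat \<Rightarrow> real) \<Rightarrow> nat list \<Rightarrow> bool" where
  "has_pattern x r \<longleftrightarrow>
     (\<forall>k. 0 < k \<longrightarrow> k < length r \<longrightarrow>
        x (r ! (k - 1)) \<ge> x (r ! k) \<and>
        (x (r ! (k - 1)) = x (r ! k) \<longrightarrow> r ! (k - 1) > r ! k))"

text \<open>P_pi = {s. (X(shift^d s), ..., X(s)) has ordinal pattern pi}: entry i is X(shift^(d-i) s).\<close>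

definition ordinal_set ::
  "(nat \<Rightarrow> nat) measure \<Rightarrow> ((nat \<Rightarrow> nat) \<Rightarrow> real) \<Rightarrow> nat \<Rightarrow> nat list \<Rightarrow> (nat \<Rightarrow> nat) set" where
  "ordinal_set M X d \<pi> = {s \<in> space M. has_pattern (\<lambda>i. X ((shift ^^ (d - i)) s)) \<pi>}"

definition generating :: "(nat \<Rightarrow> 'a) measure \<Rightarrow> 'i set \<Rightarrow> ('i \<Rightarrow> (nat \<Rightarrow> 'a) set) \<Rightarrow> bool" where
  "generating M I G \<longleftrightarrow>
     (\<forall>B\<in>sets M. \<exists>A\<in>sigma_sets (space M) {(shift ^^ n) -` G i \<inter> space M | n i. i \<in> I}.
        measure M ((A - B) \<union> (B - A)) = 0)"

definition markov_property :: "(nat \<Rightarrow> 'a) measure \<Rightarrow> 'i set \<Rightarrow> ('i \<Rightarrow> (nat \<Rightarrow> 'a) set) \<Rightarrow> bool" where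
  "markov_property M I G \<longleftrightarrow>
     (\<forall>n::nat. 1 \<le> n \<longrightarrow> (\<forall>ix :: nat \<Rightarrow> 'i. (\<forall>k\<le>n. ix k \<in> I) \<longrightarrow>
        0 < measure M (\<Inter>k<n. (shift ^^ k) -` G (ix k) \<inter> space M) \<longrightarrow>
        measure M (\<Inter>k\<le>n. (shift ^^ k) -` G (ix k) \<inter> space M)
          / measure M (\<Inter>k<n. (shift ^^ k) -` G (ix k) \<inter> space M)
        = measure M (G (ix (n - 1)) \<inter> (shift -` G (ix n) \<inter> space M))
          / measure M (G (ix (n - 1)))))"

end

theory Submission
  imports Defs "HOL-Library.Fun_Lexorder"
begin

text \<open>
  For a binary sequence that switches symbol infinitely often, \<open>s \<prec> \<sigma> s\<close> holds exactly when
  \<open>s\<^sub>0 = 0\<close>. As \<open>X\<close> orders the shifts of \<open>s\<close> lexicographically, the ordinal pattern of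
  \<open>(X(\<sigma>\<^sup>d s), \<dots>, X(s))\<close> is the pattern of lexicographic comparisons among \<open>s, \<dots>, \<sigma>\<^sup>d s\<close>;
  since \<open>d \<ge> 1\<close> it determines \<open>s\<^sub>0\<close>, and conversely \<open>s\<^sub>0\<close> together with the pattern of \<open>\<sigma> s\<close>
  determines the pattern of \<open>s\<close>. So on switching sequences the first \<open>m + 1\<close> patterns of a word
  pin down the first \<open>m + 1\<close> symbols, and there the set of sequences with a given pattern word
  coincides with a cylinder intersected with \<open>\<sigma>\<^sup>-\<^sup>m\<close> of its last pattern set. The Markov property of the chain
  then passes to the partition, and as \<open>s\<^sub>0\<close> is a function of the pattern, every cylinder is
  generated. Ergodicity is needed only to make the switching sequences a set of full measure:
  it excludes an absorbing symbol.
\<close>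

(* Not [simp]: the simplifier would use these to eta-expand every occurrence of shift. *)
lemma shift_apply: "shift s j = s (Suc j)"
  by (simp add: shift_def)

lemma funpow_shift_apply: "(shift ^^ n) s j = s (j + n)"
  by (induction n arbitrary: j) (simp_all add: shift_apply)

lemma funpow_shift_in_seq_space: "s \<in> seq_space l \<Longrightarrow> (shift ^^ n) s \<in> seq_space l"
  by (simp add: seq_space_def funpow_shift_apply)

lemma lex_less_eq_less_fun: "lex_less = less_fun"
  by (auto simp: fun_eq_iff lex_less_def less_fun_def)

lemma lex_less_total: "r \<noteq> s \<Longrightarrow> lex_less r s \<or> lex_less s r"
proof -
  assume "r \<noteq> s"
  then have ex: "\<exists>k. r k \<noteq> s k" by auto
  define k where "k = (LEAST k. r k \<noteq> s k)"
  have "r k \<noteq> s k" using LeastI_ex[OF ex] k_def by simp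
  moreover have "\<forall>i<k. r i = s i" using not_less_Least k_def by blast
  ultimately show ?thesis unfolding lex_less_def by (metis linorder_neqE_nat)
qed

lemma not_lex_le_iff: "\<not> lex_le r s \<longleftrightarrow> lex_less s r"
  using lex_less_total less_fun_asym less_fun_irrefl
  unfolding lex_le_def lex_less_eq_less_fun by blast

lemma lex_less_iff_head:
  "lex_less r s \<longleftrightarrow> r 0 < s 0 \<or> (r 0 = s 0 \<and> lex_less (shift r) (shift s))"
proof
  assume "lex_less r s"
  then obtain k where k: "\<forall>i<k. r i = s i" "r k < s k" unfolding lex_less_def by blast
  show "r 0 < s 0 \<or> (r 0 = s 0 \<and> lex_less (shift r) (shift s))"
  proof (cases k)
    case (Suc j)
    then have "\<forall>i<j. shift r i = shift s i" "shift r j < shift s j" using k by (auto simp: shift_apply)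
    then show ?thesis using k Suc unfolding lex_less_def by auto
  qed (use k in simp)
next
  assume "r 0 < s 0 \<or> (r 0 = s 0 \<and> lex_less (shift r) (shift s))"
  then show "lex_less r s"
  proof
    assume "r 0 = s 0 \<and> lex_less (shift r) (shift s)"
    then obtain k where "r 0 = s 0" "\<forall>i<k. r (Suc i) = s (Suc i)" "r (Suc k) < s (Suc k)"
      unfolding lex_less_def by (auto simp: shift_apply)
    then have "\<forall>i<Suc k. r i = s i" by (auto simp: less_Suc_eq_0_disj)
    with \<open>r (Suc k) < s (Suc k)\<close> show ?thesis unfolding lex_less_def by blast
  qed (auto simp: lex_less_def intro: exI[of _ 0])
qed

definition ordinal_greater :: "(nat \<Rightarrow> real) \<Rightarrow> nat \<Rightarrow> nat \<Rightarrow> bool" where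
  "ordinal_greater x i j \<longleftrightarrow> x j < x i \<or> (x i = x j \<and> j < i)"

lemma transp_ordinal_greater: "transp (ordinal_greater x)"
  by (auto simp: transp_def ordinal_greater_def)

lemma asymp_ordinal_greater: "asymp (ordinal_greater x)"
  by (rule asympI) (auto simp: ordinal_greater_def)

lemma has_pattern_iff_sorted_wrt: "has_pattern x r \<longleftrightarrow> sorted_wrt (ordinal_greater x) r"
proof -
  have step: "(x b \<le> x a \<and> (x a = x b \<longrightarrow> b < a)) \<longleftrightarrow> ordinal_greater x a b" for a b
    by (auto simp: ordinal_greater_def)
  have "(\<forall>k. 0 < k \<longrightarrow> k < length r \<longrightarrow> ordinal_greater x (r ! (k - 1)) (r ! k))
      \<longleftrightarrow> (\<forall>i. Suc i < length r \<longrightarrow> ordinal_greater x (r ! i) (r ! Suc i))"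
    by (metis Suc_pred diff_Suc_1 zero_less_Suc)
  then show ?thesis
    unfolding sorted_wrt_iff_nth_Suc_transp[OF transp_ordinal_greater] has_pattern_def step .
qed

lemma sorted_listing_exists:
  "finite A \<Longrightarrow> \<exists>r. distinct r \<and> set r = A \<and> sorted_wrt (ordinal_greater x) r"
proof (induction "card A" arbitrary: A)
  case (Suc n)
  define m where "m = Max {i \<in> A. x i = Max (x ` A)}"
  have "A \<noteq> {}" using Suc.hyps(2) by auto
  then have "Max (x ` A) \<in> x ` A" using Suc.prems by simp
  then obtain i where "i \<in> A" "x i = Max (x ` A)" by auto
  then have m: "m \<in> A" "x m = Max (x ` A)"
    using Max_in[of "{i \<in> A. x i = Max (x ` A)}"] Suc.prems unfolding m_def by auto
  have first: "ordinal_greater x m a" if a: "a \<in> A - {m}" for a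
  proof -
    have "x a \<le> x m" using a m Suc.prems by simp
    moreover have "x a = x m \<Longrightarrow> a \<le> m" using a m Suc.prems unfolding m_def by simp
    ultimately show ?thesis using a unfolding ordinal_greater_def by fastforce
  qed
  obtain r where "distinct r" "set r = A - {m}" "sorted_wrt (ordinal_greater x) r"
    using Suc m by (metis card_Diff_singleton diff_Suc_1 finite_Diff)
  then show ?case using m first by (intro exI[of _ "m # r"]) auto
qed simp

lemma pattern_exists: "\<exists>r\<in>patterns d. has_pattern x r"
  using sorted_listing_exists[of "{0..d}" x]
  unfolding has_pattern_iff_sorted_wrt patterns_def by auto

lemma finite_patterns: "finite (patterns d)"
proof -
  have "patterns d \<subseteq> {xs. set xs \<subseteq> {0..d} \<and> length xs = Suc d}"
    unfolding patterns_def by (auto simp: distinct_card[symmetric])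
  then show ?thesis by (rule finite_subset) (simp add: finite_lists_length_eq)
qed

lemma sorted_wrt_agree:
  assumes "sorted_wrt P xs" "sorted_wrt Q xs" "asymp P"
    and "i \<in> set xs" "j \<in> set xs" "P i j"
  shows "Q i j"
proof -
  obtain a b where ab: "a < length xs" "xs ! a = i" "b < length xs" "xs ! b = j"
    using assms(4,5) by (meson in_set_conv_nth)
  consider "a < b" | "a = b" | "b < a" by linarith
  then show ?thesis
  proof cases
    case 1
    then show ?thesis using sorted_wrt_nth_less[OF assms(2)] ab by blast
  next
    case 2
    then show ?thesis using assms(3,6) ab by (metis asympD)
  next
    case 3
    then have "P j i" using sorted_wrt_nth_less[OF assms(1)] ab by blast
    then show ?thesis using assms(3,6) by (metis asympD)
  qed
qed

lemma has_pattern_iff_same_order: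
  assumes \<pi>: "\<pi> \<in> patterns d" and x: "has_pattern x \<pi>"
  shows "has_pattern y \<pi> \<longleftrightarrow> (\<forall>i j. i < j \<longrightarrow> j \<le> d \<longrightarrow> (x j < x i \<longleftrightarrow> y j < y i))"
proof -
  have set\<pi>: "set \<pi> = {0..d}" using \<pi> by (simp add: patterns_def)
  have lt: "ordinal_greater z i j \<longleftrightarrow> z j < z i" if "i < j" for z :: "nat \<Rightarrow> real" and i j
    using that by (auto simp: ordinal_greater_def)
  show ?thesis
  proof
    assume y: "has_pattern y \<pi>"
    show "\<forall>i j. i < j \<longrightarrow> j \<le> d \<longrightarrow> (x j < x i \<longleftrightarrow> y j < y i)"
    proof (intro allI impI)
      fix i j :: nat assume ij: "i < j" "j \<le> d"
      then have "i \<in> set \<pi>" "j \<in> set \<pi>" using set\<pi> by auto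
      then have "ordinal_greater x i j \<longleftrightarrow> ordinal_greater y i j"
        using sorted_wrt_agree[OF _ _ asymp_ordinal_greater] x y by (metis has_pattern_iff_sorted_wrt)
      then show "x j < x i \<longleftrightarrow> y j < y i" using lt[OF ij(1)] by simp
    qed
  next
    assume same: "\<forall>i j. i < j \<longrightarrow> j \<le> d \<longrightarrow> (x j < x i \<longleftrightarrow> y j < y i)"
    have "ordinal_greater y i j"
      if "i \<in> set \<pi>" "j \<in> set \<pi>" "ordinal_greater x i j" for i j
    proof -
      have "i \<le> d" "j \<le> d" using that(1,2) set\<pi> by auto
      then consider "i < j" "x j < x i \<longleftrightarrow> y j < y i" | "j < i" "x i < x j \<longleftrightarrow> y i < y j" | "i = j"
        using same by (metis linorder_neqE_nat)
      then show ?thesis using that(3) by cases (auto simp: ordinal_greater_def)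
    qed
    then show "has_pattern y \<pi>"
      using x unfolding has_pattern_iff_sorted_wrt by (rule sorted_wrt_mono_rel)
  qed
qed

lemma lexicographic_like_less_iff:
  assumes "lexicographic_like M X" "s \<in> space M"
  shows "X ((shift ^^ j) s) < X ((shift ^^ n) s) \<longleftrightarrow> lex_less ((shift ^^ j) s) ((shift ^^ n) s)"
  using assms not_lex_le_iff unfolding lexicographic_like_def by (metis not_le)

definition same_shift_order :: "nat \<Rightarrow> (nat \<Rightarrow> nat) \<Rightarrow> (nat \<Rightarrow> nat) \<Rightarrow> bool" where
  "same_shift_order d s t \<longleftrightarrow> (\<forall>b a. b < a \<longrightarrow> a \<le> d \<longrightarrow>
     (lex_less ((shift ^^ b) s) ((shift ^^ a) s) \<longleftrightarrow> lex_less ((shift ^^ b) t) ((shift ^^ a) t)))"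

lemma ordinal_set_iff_same_shift_order:
  assumes X: "lexicographic_like M X" and \<pi>: "\<pi> \<in> patterns d"
    and s: "s \<in> ordinal_set M X d \<pi>" and t: "t \<in> space M"
  shows "t \<in> ordinal_set M X d \<pi> \<longleftrightarrow> same_shift_order d s t"
proof -
  let ?L = "\<lambda>u b a. lex_less ((shift ^^ b) u) ((shift ^^ a) u)"
  have s': "s \<in> space M" "has_pattern (\<lambda>i. X ((shift ^^ (d - i)) s)) \<pi>"
    using s by (simp_all add: ordinal_set_def)
  have "(\<forall>i j. i < j \<longrightarrow> j \<le> d \<longrightarrow>
          (X ((shift ^^ (d - j)) s) < X ((shift ^^ (d - i)) s) \<longleftrightarrow>
           X ((shift ^^ (d - j)) t) < X ((shift ^^ (d - i)) t)))
      \<longleftrightarrow> (\<forall>i j. i < j \<longrightarrow> j \<le> d \<longrightarrow> (?L s (d - j) (d - i) \<longleftrightarrow> ?L t (d - j) (d - i)))"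
    using lexicographic_like_less_iff[OF X] s'(1) t by simp
  also have "\<dots> \<longleftrightarrow> same_shift_order d s t"
    unfolding same_shift_order_def
  proof (rule iffI; intro allI impI)
    fix b a assume H: "\<forall>i j. i < j \<longrightarrow> j \<le> d \<longrightarrow> (?L s (d - j) (d - i) \<longleftrightarrow> ?L t (d - j) (d - i))"
      and ba: "b < a" "a \<le> d"
    show "?L s b a \<longleftrightarrow> ?L t b a" using H[rule_format, of "d - a" "d - b"] ba by simp
  next
    fix i j assume H: "\<forall>b a. b < a \<longrightarrow> a \<le> d \<longrightarrow> (?L s b a \<longleftrightarrow> ?L t b a)"
      and ij: "i < j" "j \<le> d"
    show "?L s (d - j) (d - i) \<longleftrightarrow> ?L t (d - j) (d - i)" using H ij by simp
  qed
  finally show ?thesis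
    using has_pattern_iff_same_order[OF \<pi> s'(2)] t by (simp add: ordinal_set_def)
qed

definition switches_infinitely :: "(nat \<Rightarrow> nat) \<Rightarrow> bool" where
  "switches_infinitely s \<longleftrightarrow> (\<forall>k. \<exists>i\<ge>k. s i \<noteq> s (Suc i))"

lemma switches_infinitely_funpow_shift_iff:
  "switches_infinitely ((shift ^^ n) s) \<longleftrightarrow> switches_infinitely s"
  unfolding switches_infinitely_def
proof (intro iffI allI)
  fix k assume "\<forall>k. \<exists>i\<ge>k. (shift ^^ n) s i \<noteq> (shift ^^ n) s (Suc i)"
  then obtain i where "i \<ge> k" "s (i + n) \<noteq> s (Suc (i + n))" by (auto simp: funpow_shift_apply)
  then show "\<exists>i\<ge>k. s i \<noteq> s (Suc i)" by (intro exI[of _ "i + n"]) auto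
next
  fix k assume "\<forall>k. \<exists>i\<ge>k. s i \<noteq> s (Suc i)"
  then obtain i where "i \<ge> k + n" "s i \<noteq> s (Suc i)" by blast
  then show "\<exists>i\<ge>k. (shift ^^ n) s i \<noteq> (shift ^^ n) s (Suc i)"
    by (intro exI[of _ "i - n"]) (auto simp: Suc_diff_le funpow_shift_apply)
qed

lemma lex_less_shift_iff_head:
  assumes "s \<in> seq_space 1" "switches_infinitely s"
  shows "lex_less s (shift s) \<longleftrightarrow> s 0 = 0"
proof -
  have ex: "\<exists>i. s i \<noteq> s (Suc i)" using assms(2) unfolding switches_infinitely_def by blast
  define k where "k = (LEAST i. s i \<noteq> s (Suc i))"
  have k: "s k \<noteq> s (Suc k)" using LeastI_ex[OF ex] k_def by simp
  have before: "\<forall>i<k. s i = shift s i" using not_less_Least k_def by (fastforce simp: shift_apply)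
  then have "s k = s 0" by (induction k) (auto simp: shift_apply)
  moreover have "s k \<le> 1" "s (Suc k) \<le> 1" using assms(1) by (auto simp: seq_space_def)
  ultimately have "s 0 = 0 \<and> s k < shift s k \<or> s 0 = 1 \<and> shift s k < s k"
    using k by (auto simp: shift_apply)
  then show ?thesis using before less_fun_asym unfolding lex_less_def lex_less_eq_less_fun less_fun_def
    by (metis zero_neq_one)
qed

lemma same_shift_order_imp_head_eq:
  assumes "1 \<le> d" "s \<in> seq_space 1" "t \<in> seq_space 1"
    and "switches_infinitely s" "switches_infinitely t" "same_shift_order d s t"
  shows "s 0 = t 0"
proof -
  have "lex_less ((shift ^^ 0) s) ((shift ^^ 1) s) \<longleftrightarrow> lex_less ((shift ^^ 0) t) ((shift ^^ 1) t)"
    using assms(6)[unfolded same_shift_order_def, rule_format, of 0 1] assms(1) by simp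
  then have "lex_less s (shift s) \<longleftrightarrow> lex_less t (shift t)" by simp
  then have "s 0 = 0 \<longleftrightarrow> t 0 = 0" using lex_less_shift_iff_head assms(2-5) by blast
  moreover have "s 0 \<le> 1" "t 0 \<le> 1" using assms(2,3) by (auto simp: seq_space_def)
  ultimately show ?thesis by linarith
qed

lemma same_shift_order_shift:
  assumes s: "s \<in> seq_space 1" "switches_infinitely s" and t: "t \<in> seq_space 1" "switches_infinitely t"
    and head: "s 0 = t 0" and tail: "same_shift_order d (shift s) (shift t)"
  shows "same_shift_order d s t"
  unfolding same_shift_order_def
proof (intro allI impI)
  fix b a assume ba: "b < a" "a \<le> d"
  have comm: "(shift ^^ a) (shift u) = shift ((shift ^^ a) u)" for u :: "nat \<Rightarrow> nat" and a
    by (simp add: funpow_swap1)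
  have tail': "lex_less ((shift ^^ b) (shift s)) ((shift ^^ a) (shift s))
      \<longleftrightarrow> lex_less ((shift ^^ b) (shift t)) ((shift ^^ a) (shift t))" if "b < a" "a \<le> d" for b a
    using tail[unfolded same_shift_order_def, rule_format, OF that] .
  have shifted: "(shift ^^ k) u = (shift ^^ (k - 1)) (shift u)" if "0 < k" for k and u :: "nat \<Rightarrow> nat"
    using that by (cases k) (simp_all add: funpow_swap1)
  show "lex_less ((shift ^^ b) s) ((shift ^^ a) s) \<longleftrightarrow> lex_less ((shift ^^ b) t) ((shift ^^ a) t)"
  proof (cases "b = 0")
    case False
    then have "b - 1 < a - 1" "a - 1 \<le> d" "0 < b" "0 < a" using ba by auto
    from tail'[OF this(1,2)] show ?thesis unfolding shifted[OF \<open>0 < b\<close>] shifted[OF \<open>0 < a\<close>] .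
  next
    case True
    have "lex_less ((shift ^^ (a - 1)) (shift u)) ((shift ^^ a) (shift u)) \<longleftrightarrow> u a = 0"
      if "u \<in> seq_space 1" "switches_infinitely u" for u
    proof -
      have "(shift ^^ a) u \<in> seq_space 1" "switches_infinitely ((shift ^^ a) u)"
        using that funpow_shift_in_seq_space switches_infinitely_funpow_shift_iff by auto
      moreover have "(shift ^^ (a - 1)) (shift u) = (shift ^^ a) u" using shifted[of a u] ba True by simp
      ultimately show ?thesis using lex_less_shift_iff_head comm by (simp add: funpow_shift_apply)
    qed
    then have "s a = 0 \<longleftrightarrow> t a = 0" using tail'[of "a - 1" a] ba True s t by simp
    moreover have "s a \<le> 1" "t a \<le> 1" using s t by (auto simp: seq_space_def)
    ultimately have "s a = t a" by linarith
    then show ?thesis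
      using tail'[of 0 a, unfolded comm] ba True head lex_less_iff_head[of s] lex_less_iff_head[of t]
      by (simp add: funpow_shift_apply)
  qed
qed

lemma same_shift_order_funpow_shift:
  assumes s: "s \<in> seq_space 1" "switches_infinitely s" and t: "t \<in> seq_space 1" "switches_infinitely t"
    and prefix: "\<forall>i<m. s i = t i" and last: "same_shift_order d ((shift ^^ m) s) ((shift ^^ m) t)"
    and "k \<le> m"
  shows "same_shift_order d ((shift ^^ k) s) ((shift ^^ k) t)"
  using \<open>k \<le> m\<close>
proof (induction rule: inc_induct)
  case (step n)
  show ?case
  proof (rule same_shift_order_shift)
    show "(shift ^^ n) s \<in> seq_space 1" "(shift ^^ n) t \<in> seq_space 1"
      using s t funpow_shift_in_seq_space by auto
    show "switches_infinitely ((shift ^^ n) s)" "switches_infinitely ((shift ^^ n) t)"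
      using s t switches_infinitely_funpow_shift_iff by auto
    show "(shift ^^ n) s 0 = (shift ^^ n) t 0" using prefix step.hyps by (simp add: funpow_shift_apply)
    show "same_shift_order d (shift ((shift ^^ n) s)) (shift ((shift ^^ n) t))"
      using step.IH by (simp only: funpow.simps comp_apply)
  qed
qed (rule last)

lemma cylinder_0: "cylinder l a 0 = seq_space l"
  by (simp add: cylinder_def)

lemma cylinder_eq_empty:
  assumes "i < n" "l < a i"
  shows "cylinder l a n = {}"
proof -
  have "a i \<le> l" if "t \<in> cylinder l a n" for t
    using that assms(1) unfolding cylinder_def seq_space_def by (metis (mono_tags, lifting) mem_Collect_eq)
  then show ?thesis using assms(2) by force
qed

lemma cylinder_Int_funpow_shift_cylinder:
  "cylinder l w (Suc n) \<inter> ((shift ^^ n) -` cylinder l e (Suc k) \<inter> seq_space l) =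
    (if e 0 = w n then cylinder l (\<lambda>i. if i \<le> n then w i else e (i - n)) (Suc (n + k)) else {})"
proof (cases "e 0 = w n")
  case True
  have "(\<forall>i<Suc n. t i = w i) \<and> (\<forall>i<Suc k. t (i + n) = e i) \<longleftrightarrow>
      (\<forall>i<Suc (n + k). t i = (if i \<le> n then w i else e (i - n)))" for t :: "nat \<Rightarrow> nat"
  proof (intro iffI allI impI conjI)
    fix i assume "(\<forall>i<Suc n. t i = w i) \<and> (\<forall>i<Suc k. t (i + n) = e i)" "i < Suc (n + k)"
    then show "t i = (if i \<le> n then w i else e (i - n))"
      by (cases "i \<le> n") (auto dest: spec[of _ "i - n"])
  next
    fix i assume H: "\<forall>i<Suc (n + k). t i = (if i \<le> n then w i else e (i - n))"
    { assume "i < Suc n" then show "t i = w i" using H by auto }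
    { assume "i < Suc k" then show "t (i + n) = e i"
        using H[rule_format, of "i + n"] True by (cases i) auto }
  qed
  moreover have "t \<in> cylinder l w (Suc n) \<inter> ((shift ^^ n) -` cylinder l e (Suc k) \<inter> seq_space l) \<longleftrightarrow>
      t \<in> seq_space l \<and> (\<forall>i<Suc n. t i = w i) \<and> (\<forall>i<Suc k. t (i + n) = e i)" for t
    by (auto simp: cylinder_def seq_space_def funpow_shift_apply)
  ultimately show ?thesis using True unfolding set_eq_iff by (simp add: cylinder_def)
qed (auto simp: cylinder_def funpow_shift_apply)

lemma sigma_sets_approximation:
  assumes S: "sigma_algebra \<Omega> S" and B: "B \<in> sigma_sets \<Omega> G"
    and G: "\<And>g. g \<in> G \<Longrightarrow> \<exists>A\<in>S. A - g \<subseteq> N \<and> g - A \<subseteq> N"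
  shows "\<exists>A\<in>S. A - B \<subseteq> N \<and> B - A \<subseteq> N"
proof -
  interpret S: sigma_algebra \<Omega> S by (rule S)
  show ?thesis using B
  proof induction
    case (Basic g)
    then show ?case by (rule G)
  next
    case Empty
    show ?case using S.empty_sets by blast
  next
    case (Compl B)
    then obtain A where "A \<in> S" "A - B \<subseteq> N" "B - A \<subseteq> N" by blast
    moreover have "\<Omega> - A \<in> S" using \<open>A \<in> S\<close> by (rule S.compl_sets)
    ultimately show ?case by (intro bexI[of _ "\<Omega> - A"]) auto
  next
    case (Union B)
    then obtain A where A: "\<And>i. A i \<in> S" "\<And>i. A i - B i \<subseteq> N" "\<And>i. B i - A i \<subseteq> N" by metis
    then have "(\<Union>i. A i) \<in> S" by blast
    with A show ?case by (intro bexI[of _ "\<Union>i. A i"]) blast+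
  qed
qed

locale markov_shift_measure =
  fixes l :: nat and Q :: "nat \<Rightarrow> nat \<Rightarrow> real" and p :: "nat \<Rightarrow> real"
    and M :: "(nat \<Rightarrow> nat) measure"
  assumes markov_shift: "markov_shift l Q p M"
begin

lemma Q_nonneg: "i \<le> l \<Longrightarrow> j \<le> l \<Longrightarrow> 0 \<le> Q i j"
  and Q_row_sum: "i \<le> l \<Longrightarrow> (\<Sum>j\<le>l. Q i j) = 1"
  and p_pos: "a \<le> l \<Longrightarrow> 0 < p a"
  and p_stationary: "j \<le> l \<Longrightarrow> (\<Sum>i\<le>l. p i * Q i j) = p j"
  and space_eq: "space M = seq_space l"
  and sets_eq: "sets M = sigma_sets (seq_space l) {cylinder l a n | a n. True}"
  using markov_shift by (simp_all add: markov_shift_def)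

lemma Q_le_one: "i \<le> l \<Longrightarrow> j \<le> l \<Longrightarrow> Q i j \<le> 1"
  using member_le_sum[of j "{..l}" "Q i"] Q_nonneg Q_row_sum by simp

lemma measure_cylinder:
  "(\<And>i. i < n \<Longrightarrow> a i \<le> l) \<Longrightarrow> 1 \<le> n \<Longrightarrow>
    measure M (cylinder l a n) = p (a 0) * (\<Prod>i<n - 1. Q (a i) (a (Suc i)))"
  using markov_shift unfolding markov_shift_def by blast

sublocale prob_space M
  using markov_shift by (simp add: markov_shift_def)

lemma cylinder_in_sets [measurable]: "cylinder l a n \<in> sets M"
  unfolding sets_eq by (rule sigma_sets.Basic) blast

lemma Int_stable_cylinders: "Int_stable {cylinder l a n | a n. True}"
proof (rule Int_stableI)
  have "cylinder l a n \<inter> cylinder l b k \<in> {cylinder l a n | a n. True}" if "k \<le> n" for a b n k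
  proof (cases "\<forall>i<k. a i = b i")
    case True
    then have "cylinder l a n \<inter> cylinder l b k = cylinder l a n"
      using that by (auto simp: cylinder_def)
    then show ?thesis by blast
  next
    case False
    then have "cylinder l a n \<inter> cylinder l b k = cylinder l (\<lambda>_. Suc l) 1"
      using that cylinder_eq_empty[of 0 1 l "\<lambda>_. Suc l"] by (auto simp: cylinder_def)
    then show ?thesis by blast
  qed
  note Int_cylinders = this
  show "A \<inter> B \<in> {cylinder l a n | a n. True}"
    if AB: "A \<in> {cylinder l a n | a n. True}" "B \<in> {cylinder l a n | a n. True}" for A B
  proof -
    obtain a n b k where "A = cylinder l a n" "B = cylinder l b k" using AB by blast
    then show ?thesis using Int_cylinders[of k n a b] Int_cylinders[of n k b a]
      by (cases "k \<le> n") (auto simp: Int_commute)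
  qed
qed

lemma shift_preimage_cylinder:
  "shift -` cylinder l a n \<inter> space M = (\<Union>c\<le>l. cylinder l (case_nat c a) (Suc n))"
proof (intro set_eqI iffI)
  fix s assume "s \<in> shift -` cylinder l a n \<inter> space M"
  then show "s \<in> (\<Union>c\<le>l. cylinder l (case_nat c a) (Suc n))"
    by (auto simp: cylinder_def space_eq seq_space_def All_less_Suc2 shift_apply intro!: bexI[of _ "s 0"])
qed (auto simp: cylinder_def space_eq seq_space_def All_less_Suc2 shift_apply)

lemma measurable_shift [measurable]: "shift \<in> measurable M M"
proof (rule measurable_sigma_sets[OF sets_eq])
  show "{cylinder l a n | a n. True} \<subseteq> Pow (seq_space l)" by (auto simp: cylinder_def)
  show "shift \<in> space M \<rightarrow> seq_space l" by (auto simp: space_eq seq_space_def shift_apply)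
  show "shift -` A \<inter> space M \<in> sets M" if "A \<in> {cylinder l a n | a n. True}" for A
    using that shift_preimage_cylinder by auto
qed

lemma measurable_funpow_shift [measurable]: "shift ^^ n \<in> measurable M M"
  by (rule measurable_compose_n[OF measurable_shift])

lemma measurable_coordinate [measurable]: "(\<lambda>s. s i) \<in> measurable M (count_space UNIV)"
proof -
  have "(\<lambda>s. s i) -` {c} \<inter> space M = (shift ^^ i) -` cylinder l (\<lambda>_. c) 1 \<inter> space M" for c
    by (auto simp: cylinder_def space_eq seq_space_def funpow_shift_apply)
  then show ?thesis by (simp add: measurable_count_space_eq2_countable)
qed

lemma measure_shift_preimage_cylinder:
  "measure M (shift -` cylinder l a n \<inter> space M) = measure M (cylinder l a n)"
proof (cases "n = 0 \<or> (\<exists>i<n. l < a i)")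
  case True
  moreover have "shift -` seq_space l \<inter> seq_space l = seq_space l"
    by (auto simp: seq_space_def shift_apply)
  ultimately show ?thesis
    using cylinder_eq_empty[of _ n l a] by (auto simp: cylinder_0 space_eq)
next
  case False
  then obtain m where n: "n = Suc m" and a: "\<And>i. i < n \<Longrightarrow> a i \<le> l"
    by (metis not0_implies_Suc not_le)
  have cons: "measure M (cylinder l (case_nat c a) (Suc n)) = p c * Q c (a 0) * (\<Prod>i<m. Q (a i) (a (Suc i)))"
    if "c \<le> l" for c
  proof -
    have "case_nat c a i \<le> l" if "i < Suc n" for i
      using that \<open>c \<le> l\<close> a by (cases i) auto
    then show ?thesis by (simp add: measure_cylinder n prod.lessThan_Suc_shift del: prod.lessThan_Suc)
  qed
  have "measure M (shift -` cylinder l a n \<inter> space M) =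
      (\<Sum>c\<le>l. measure M (cylinder l (case_nat c a) (Suc n)))"
  proof -
    have "t 0 = c" if "t \<in> cylinder l (case_nat c a) (Suc n)" for t c
      using that by (simp add: cylinder_def)
    then have "disjoint_family_on (\<lambda>c. cylinder l (case_nat c a) (Suc n)) {..l}"
      unfolding disjoint_family_on_def by blast
    then show ?thesis unfolding shift_preimage_cylinder by (intro measure_finite_Union) auto
  qed
  also have "\<dots> = (\<Sum>c\<le>l. p c * Q c (a 0)) * (\<Prod>i<m. Q (a i) (a (Suc i)))"
    using cons by (simp add: sum_distrib_right)
  also have "\<dots> = measure M (cylinder l a n)"
    using a by (simp add: p_stationary measure_cylinder n)
  finally show ?thesis .
qed

lemma distr_shift: "distr M M shift = M"
proof (rule measure_eqI_generator_eq[OF Int_stable_cylinders _ _ _ sets_eq])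
  show "{cylinder l a n | a n. True} \<subseteq> Pow (seq_space l)" by (auto simp: cylinder_def)
  show "emeasure (distr M M shift) A = emeasure M A" if "A \<in> {cylinder l a n | a n. True}" for A
    using that measure_shift_preimage_cylinder
    by (auto simp: emeasure_distr emeasure_eq_measure)
  show "sets (distr M M shift) = sigma_sets (seq_space l) {cylinder l a n | a n. True}"
    by (simp add: sets_eq)
  show "range (\<lambda>_. cylinder l a 0) \<subseteq> {cylinder l a n | a n. True}" by blast
  show "(\<Union>i. cylinder l a 0) = seq_space l" by (simp add: cylinder_0)
qed (simp add: emeasure_distr emeasure_eq_measure)

lemma measure_funpow_shift_preimage:
  assumes "E \<in> sets M"
  shows "measure M ((shift ^^ k) -` E \<inter> space M) = measure M E"
proof -
  have "distr M M (shift ^^ k) = M"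
  proof (induction k)
    case (Suc k)
    have "distr M M (shift ^^ Suc k) = distr (distr M M (shift ^^ k)) M shift"
      by (simp only: funpow.simps(2) distr_distr[OF measurable_shift measurable_funpow_shift])
    then show ?case by (simp only: Suc distr_shift)
  qed (simp add: distr_id2)
  then show ?thesis using assms measure_distr[OF measurable_funpow_shift, of E k] by simp
qed


lemma measure_cylinder_append:
  assumes w: "\<And>i. i \<le> n \<Longrightarrow> w i \<le> l" and e: "\<And>i. i \<le> k \<Longrightarrow> e i \<le> l" and head: "e 0 = w n"
  shows "measure M (cylinder l (\<lambda>i. if i \<le> n then w i else e (i - n)) (Suc (n + k))) * p (w n) =
    measure M (cylinder l w (Suc n)) * measure M (cylinder l e (Suc k))"
proof -
  define v where "v i = (if i \<le> n then w i else e (i - n))" for i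
  have v: "v i \<le> l" if "i < Suc (n + k)" for i using that w e by (auto simp: v_def)
  have split: "(\<Prod>i<n + k. f i) = (\<Prod>i<n. f i) * (\<Prod>i<k. f (n + i))" for f :: "nat \<Rightarrow> real"
    by (induction k) (simp_all add: mult.assoc)
  have "(\<Prod>i<n. Q (v i) (v (Suc i))) = (\<Prod>i<n. Q (w i) (w (Suc i)))"
    by (rule prod.cong) (auto simp: v_def)
  moreover have "(\<Prod>i<k. Q (v (n + i)) (v (Suc (n + i)))) = (\<Prod>i<k. Q (e i) (e (Suc i)))"
    by (rule prod.cong) (auto simp: v_def head split: nat.split)
  ultimately have "measure M (cylinder l v (Suc (n + k))) =
      p (w 0) * (\<Prod>i<n. Q (w i) (w (Suc i))) * (\<Prod>i<k. Q (e i) (e (Suc i)))"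
    using v by (simp add: measure_cylinder split mult.assoc) (simp add: v_def)
  then show ?thesis
    unfolding v_def[symmetric] using w e head by (simp add: measure_cylinder)
qed

lemma measure_cylinder_Int_funpow_shift_cylinder:
  assumes w: "\<And>i. i \<le> n \<Longrightarrow> w i \<le> l"
  shows "measure M (cylinder l w (Suc n) \<inter> ((shift ^^ n) -` cylinder l e k \<inter> space M)) * p (w n) =
    measure M (cylinder l w (Suc n)) * measure M (cylinder l (\<lambda>_. w n) 1 \<inter> cylinder l e k)"
proof (cases k)
  case 0
  have "cylinder l w (Suc n) \<inter> ((shift ^^ n) -` seq_space l \<inter> space M) = cylinder l w (Suc n)"
    "cylinder l (\<lambda>_. w n) 1 \<inter> seq_space l = cylinder l (\<lambda>_. w n) 1"
    by (auto simp: cylinder_def space_eq seq_space_def funpow_shift_apply)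
  then show ?thesis using 0 w by (simp add: cylinder_0 measure_cylinder)
next
  case (Suc k')
  have Z: "cylinder l (\<lambda>_. w n) 1 \<inter> cylinder l e k = (if e 0 = w n then cylinder l e k else {})"
    using Suc by (auto simp: cylinder_def)
  consider "\<exists>i<k. l < e i" | "e 0 \<noteq> w n" | "e 0 = w n" "\<And>i. i \<le> k' \<Longrightarrow> e i \<le> l"
    using Suc by (metis le_imp_less_Suc not_le)
  then show ?thesis
  proof cases
    case 1
    then show ?thesis using cylinder_eq_empty by auto
  next
    case 2
    then show ?thesis using Z cylinder_Int_funpow_shift_cylinder[of l w n e k'] Suc
      by (simp add: space_eq)
  next
    case 3
    then show ?thesis using Z cylinder_Int_funpow_shift_cylinder[of l w n e k'] Suc
        measure_cylinder_append[of n w k' e, OF w 3(2) 3(1)]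
      by (simp add: space_eq)
  qed
qed

lemma measure_cylinder_Int_funpow_shift:
  assumes w: "\<And>i. i \<le> n \<Longrightarrow> w i \<le> l" and E: "E \<in> sets M"
  shows "measure M (cylinder l w (Suc n) \<inter> ((shift ^^ n) -` E \<inter> space M)) * p (w n) =
    measure M (cylinder l w (Suc n)) * measure M (cylinder l (\<lambda>_. w n) 1 \<inter> E)"
proof -
  define C where "C = cylinder l w (Suc n)"
  define Z where "Z = cylinder l (\<lambda>_. w n) 1"
  have CZ: "C \<in> sets M" "Z \<in> sets M" unfolding C_def Z_def by measurable
  have mZ: "measure M Z = p (w n)" unfolding Z_def using w by (simp add: measure_cylinder)
  have gen: "{cylinder l a n | a n. True} \<subseteq> Pow (seq_space l)" by (auto simp: cylinder_def)
  have E': "E \<in> sigma_sets (seq_space l) {cylinder l a n | a n. True}" using E sets_eq by simp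
  show ?thesis unfolding C_def[symmetric] Z_def[symmetric] using Int_stable_cylinders gen E'
  proof (induction rule: sigma_sets_induct_disjoint)
    case (basic A)
    then obtain a k where A: "A = cylinder l a k" by blast
    show ?case unfolding A C_def Z_def by (rule measure_cylinder_Int_funpow_shift_cylinder[of n w, OF w])
  next
    case (compl A)
    have A: "A \<in> sets M" using compl(1) sets_eq by simp
    have "C \<inter> ((shift ^^ n) -` (seq_space l - A) \<inter> space M) = C - (C \<inter> ((shift ^^ n) -` A \<inter> space M))"
      "Z \<inter> (seq_space l - A) = Z - Z \<inter> A"
      using measurable_space[OF measurable_funpow_shift] sets.sets_into_space[OF CZ(1)]
        sets.sets_into_space[OF CZ(2)] by (auto simp: space_eq)
    then show ?case using compl(2) A CZ mZ by (simp add: finite_measure_Diff algebra_simps)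
  next
    case (union A)
    have A: "\<And>i. A i \<in> sets M" using union(2) sets_eq by auto
    have "(\<lambda>i. measure M (C \<inter> ((shift ^^ n) -` A i \<inter> space M)))
        sums measure M (\<Union>i. C \<inter> ((shift ^^ n) -` A i \<inter> space M))"
      using A CZ union(1) by (intro finite_measure_UNION) (auto simp: disjoint_family_on_def)
    from sums_mult2[OF this, of "p (w n)"]
    have "(\<lambda>i. measure M C * measure M (Z \<inter> A i))
        sums (measure M (\<Union>i. C \<inter> ((shift ^^ n) -` A i \<inter> space M)) * p (w n))"
      by (simp only: union(3))
    moreover have "(\<lambda>i. measure M (Z \<inter> A i)) sums measure M (\<Union>i. Z \<inter> A i)"
      using A CZ union(1) by (intro finite_measure_UNION) (auto simp: disjoint_family_on_def)
    from sums_mult[OF this, of "measure M C"]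
    have "(\<lambda>i. measure M C * measure M (Z \<inter> A i)) sums (measure M C * measure M (\<Union>i. Z \<inter> A i))" .
    ultimately have "measure M (\<Union>i. C \<inter> ((shift ^^ n) -` A i \<inter> space M)) * p (w n) =
        measure M C * measure M (\<Union>i. Z \<inter> A i)"
      by (rule sums_unique2)
    moreover have "C \<inter> ((shift ^^ n) -` (\<Union>i. A i) \<inter> space M) = (\<Union>i. C \<inter> ((shift ^^ n) -` A i \<inter> space M))"
      "Z \<inter> (\<Union>i. A i) = (\<Union>i. Z \<inter> A i)" by auto
    ultimately show ?case by (simp only:)
  qed simp
qed

lemma constant_sequences_eq: "{s \<in> space M. \<forall>i. s i = c} = (\<Inter>j. cylinder l (\<lambda>_. c) (Suc j))"
  by (auto simp: cylinder_def space_eq)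

lemma measure_constant_sequences:
  assumes "c \<le> l"
  shows "(\<lambda>j. p c * Q c c ^ j) \<longlonglongrightarrow> measure M {s \<in> space M. \<forall>i. s i = c}"
proof -
  have "(\<lambda>j. measure M (cylinder l (\<lambda>_. c) (Suc j))) \<longlonglongrightarrow> measure M (\<Inter>j. cylinder l (\<lambda>_. c) (Suc j))"
  proof (rule finite_Lim_measure_decseq)
    show "decseq (\<lambda>j. cylinder l (\<lambda>_. c) (Suc j))"
      by (rule decseq_SucI) (auto simp: cylinder_def)
  qed auto
  then show ?thesis using assms by (simp add: measure_cylinder constant_sequences_eq)
qed

lemma measure_constant_sequences_absorbing:
  "c \<le> l \<Longrightarrow> Q c c = 1 \<Longrightarrow> measure M {s \<in> space M. \<forall>i. s i = c} = p c"
  using measure_constant_sequences[of c] by (simp add: LIMSEQ_const_iff)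

lemma shift_preimage_eventually_constant:
  "shift -` {s \<in> space M. \<forall>\<^sub>F i in sequentially. s i = c} \<inter> space M =
    {s \<in> space M. \<forall>\<^sub>F i in sequentially. s i = c}"
proof -
  have "(\<forall>\<^sub>F i in sequentially. s (Suc i) = c) \<longleftrightarrow> (\<forall>\<^sub>F i in sequentially. s i = c)" for s :: "nat \<Rightarrow> nat"
    by (rule eventually_sequentially_Suc[of "\<lambda>i. s i = c"])
  then show ?thesis using measurable_space[OF measurable_shift] by (auto simp: shift_apply)
qed

lemma eventually_constant_in_sets [measurable]:
  "{s \<in> space M. \<forall>\<^sub>F i in sequentially. s i = c} \<in> sets M"
  unfolding eventually_sequentially by measurable

lemma eventually_constant_null:
  assumes "c \<le> l" "Q c c < 1"
  shows "{s \<in> space M. \<forall>\<^sub>F i in sequentially. s i = c} \<in> null_sets M"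
proof -
  define K where "K = {s \<in> space M. \<forall>i. s i = c}"
  have K: "K \<in> sets M" unfolding K_def by measurable
  have "(\<lambda>j. p c * Q c c ^ j) \<longlonglongrightarrow> p c * 0"
    using assms Q_nonneg by (intro tendsto_mult tendsto_const LIMSEQ_power_zero) auto
  then have "measure M K = 0"
    using measure_constant_sequences[OF assms(1)] LIMSEQ_unique unfolding K_def by fastforce
  then have "(shift ^^ k) -` K \<inter> space M \<in> null_sets M" for k
    using K measure_funpow_shift_preimage[OF K, of k] by (simp add: null_sets_def emeasure_eq_measure)
  then have null: "(\<Union>k. (shift ^^ k) -` K \<inter> space M) \<in> null_sets M" by (rule null_sets_UN)
  have "{s \<in> space M. \<forall>\<^sub>F i in sequentially. s i = c} \<subseteq> (\<Union>k. (shift ^^ k) -` K \<inter> space M)"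
  proof
    fix s assume "s \<in> {s \<in> space M. \<forall>\<^sub>F i in sequentially. s i = c}"
    then obtain N where s: "s \<in> space M" "\<forall>n\<ge>N. s n = c" unfolding eventually_sequentially by auto
    then have "(shift ^^ N) s \<in> K"
      using measurable_space[OF measurable_funpow_shift] by (auto simp: K_def funpow_shift_apply)
    then show "s \<in> (\<Union>k. (shift ^^ k) -` K \<inter> space M)" using s(1) by blast
  qed
  then show ?thesis by (rule null_sets_subset[OF null eventually_constant_in_sets])
qed

end

locale ergodic_binary_markov_shift = markov_shift_measure 1 Q p M for Q p M +
  assumes ergodic: "ergodic_shift M"
begin

lemma Q_diag_eq_one_iff: "Q 0 0 = 1 \<longleftrightarrow> Q 1 1 = 1"
proof -
  have row: "Q i 0 + Q i 1 = 1" and stat: "p 0 * Q 0 i + p 1 * Q 1 i = p i" if "i \<le> 1" for i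
    using Q_row_sum[OF that] p_stationary[OF that] by simp_all
  have "Q 0 0 = 1 \<Longrightarrow> Q 1 0 = 0" using stat[of 0] p_pos[of 1] by simp
  moreover have "Q 1 1 = 1 \<Longrightarrow> Q 0 1 = 0" using stat[of 1] p_pos[of 0] by simp
  ultimately show ?thesis using row[of 0] row[of 1] by auto
qed

lemma Q_diag_less_one:
  assumes c: "c \<le> 1"
  shows "Q c c < 1"
proof (rule ccontr)
  \<comment> \<open>If \<open>c\<close> were absorbing, so would be the other symbol \<open>c'\<close>, and the sequences eventually equal
    to \<open>c\<close> would form an invariant set of measure between \<open>p c\<close> and \<open>1 - p c'\<close>.\<close>
  define c' where "c' = 1 - c"
  have c': "c' \<le> 1" "c' \<noteq> c" using c unfolding c'_def by arith+
  assume "\<not> Q c c < 1"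
  then have "Q c c = 1" using Q_le_one[OF c c] by simp
  then have absorbing: "Q c c = 1" "Q c' c' = 1"
    using c Q_diag_eq_one_iff unfolding c'_def by (auto simp: le_Suc_eq)
  define Y where "Y = {s \<in> space M. \<forall>\<^sub>F i in sequentially. s i = c}"
  have Y: "Y \<in> sets M" unfolding Y_def by measurable
  have "measure M Y = 0 \<or> measure M Y = 1"
    using ergodic Y shift_preimage_eventually_constant unfolding ergodic_shift_def Y_def by blast
  moreover have "{s \<in> space M. \<forall>i. s i = c} \<subseteq> Y" unfolding Y_def by (auto intro: always_eventually)
  then have "p c \<le> measure M Y"
    using finite_measure_mono[OF _ Y] measure_constant_sequences_absorbing[OF c absorbing(1)] by metis
  moreover have "measure M Y + p c' \<le> 1"
  proof -
    have "Y \<inter> {s \<in> space M. \<forall>i. s i = c'} = {}"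
      using c' by (auto simp: Y_def eventually_sequentially)
    then have "measure M (Y \<union> {s \<in> space M. \<forall>i. s i = c'}) = measure M Y + p c'"
      using Y measure_constant_sequences_absorbing[OF c'(1) absorbing(2)]
      by (subst finite_measure_Union) auto
    then show ?thesis using prob_le_1[of "Y \<union> {s \<in> space M. \<forall>i. s i = c'}"] by linarith
  qed
  ultimately show False using p_pos[OF c] p_pos[OF c'(1)] by linarith
qed

definition switching :: "(nat \<Rightarrow> nat) set" where
  "switching = {s \<in> space M. switches_infinitely s}"

lemma switching_in_sets [measurable]: "switching \<in> sets M"
  unfolding switching_def switches_infinitely_def by measurable

lemma funpow_shift_in_switching_iff:
  "s \<in> space M \<Longrightarrow> (shift ^^ k) s \<in> switching \<longleftrightarrow> s \<in> switching"
  using measurable_space[OF measurable_funpow_shift] switches_infinitely_funpow_shift_iff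
  by (auto simp: switching_def)

lemma switching_iff: "s \<in> switching \<longleftrightarrow> s \<in> space M \<and> switches_infinitely s"
  by (simp add: switching_def)

lemma funpow_shift_in_switching:
  "s \<in> switching \<Longrightarrow> (shift ^^ k) s \<in> switching"
  using funpow_shift_in_switching_iff by (simp add: switching_iff)

lemma switching_binary: "s \<in> switching \<Longrightarrow> s \<in> seq_space 1"
  by (simp add: switching_def space_eq)

lemma null_sets_not_switching: "space M - switching \<in> null_sets M"
proof -
  have "space M - switching \<subseteq>
      {s \<in> space M. \<forall>\<^sub>F i in sequentially. s i = 0} \<union> {s \<in> space M. \<forall>\<^sub>F i in sequentially. s i = 1}"
  proof
    fix s assume s: "s \<in> space M - switching"
    then obtain k where k: "\<forall>i\<ge>k. s i = s (Suc i)"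
      by (auto simp: switching_def switches_infinitely_def)
    have "s i = s k" if "k \<le> i" for i using that by (induction rule: dec_induct) (simp, metis k)
    moreover have "s k \<le> 1" using s by (simp add: space_eq seq_space_def)
    ultimately show "s \<in> {s \<in> space M. \<forall>\<^sub>F i in sequentially. s i = 0} \<union> {s \<in> space M. \<forall>\<^sub>F i in sequentially. s i = 1}"
      using s unfolding eventually_sequentially by (cases "s k") auto
  qed
  moreover have "{s \<in> space M. \<forall>\<^sub>F i in sequentially. s i = 0} \<union>
      {s \<in> space M. \<forall>\<^sub>F i in sequentially. s i = 1} \<in> null_sets M"
    using eventually_constant_null Q_diag_less_one by (intro null_sets.Un) auto
  moreover have "space M - switching \<in> sets M" by measurable
  ultimately show ?thesis using null_sets_subset by blast
qed

lemma measure_Int_switching: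
  assumes "A \<in> sets M"
  shows "measure M (A \<inter> switching) = measure M A"
proof -
  have "A \<inter> switching = A - (space M - switching)" using sets.sets_into_space[OF assms] by blast
  then show ?thesis using measure_Diff_null_set[OF assms null_sets_not_switching] by simp
qed

end

locale lexicographic_ordinal_partition = ergodic_binary_markov_shift Q p M for Q p M +
  fixes X :: "(nat \<Rightarrow> nat) \<Rightarrow> real" and d :: nat
  assumes lexicographic: "lexicographic_like M X"
    and X_measurable [measurable]: "X \<in> borel_measurable M"
    and order_pos: "1 \<le> d"
begin

abbreviation P :: "nat list \<Rightarrow> (nat \<Rightarrow> nat) set" where
  "P \<equiv> ordinal_set M X d"

lemma ordinal_set_in_sets [measurable]: "P \<pi> \<in> sets M"
proof -
  define f where "f k s = X ((shift ^^ (d - \<pi> ! k)) s)" for k s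
  have [measurable]: "f k \<in> borel_measurable M" for k unfolding f_def by measurable
  have "P \<pi> = {s \<in> space M. \<forall>k\<in>{0<..<length \<pi>}.
      if \<pi> ! k < \<pi> ! (k - 1) then f k s \<le> f (k - 1) s else f k s < f (k - 1) s}"
  proof -
    have "(y \<le> x \<and> (x = y \<longrightarrow> j < i)) \<longleftrightarrow> (if j < i then y \<le> x else y < x)" for x y :: real and i j :: nat
      by auto
    then show ?thesis unfolding ordinal_set_def has_pattern_def f_def by auto
  qed
  also have "\<dots> \<in> sets M"
  proof (rule sets.sets_Collect_finite_All)
    fix k
    show "{s \<in> space M. if \<pi> ! k < \<pi> ! (k - 1) then f k s \<le> f (k - 1) s else f k s < f (k - 1) s} \<in> sets M"
      by (cases "\<pi> ! k < \<pi> ! (k - 1)") simp_all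
  qed simp
  finally show ?thesis .
qed

lemma head_eq_if_same_ordinal_set:
  assumes "\<pi> \<in> patterns d" "s \<in> P \<pi>" "t \<in> P \<pi>" "s \<in> switching" "t \<in> switching"
  shows "s 0 = t 0"
proof (rule same_shift_order_imp_head_eq[OF order_pos])
  show "same_shift_order d s t"
    using ordinal_set_iff_same_shift_order[OF lexicographic assms(1,2)] assms(3,5)
    by (simp add: switching_iff)
qed (use assms(4,5) switching_binary in \<open>simp_all add: switching_iff\<close>)

definition pattern_block :: "(nat \<Rightarrow> nat list) \<Rightarrow> nat \<Rightarrow> (nat \<Rightarrow> nat) set" where
  "pattern_block ix m = {s \<in> space M. \<forall>k<m. (shift ^^ k) s \<in> P (ix k)}"

lemma pattern_block_in_sets [measurable]: "pattern_block ix m \<in> sets M"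
  unfolding pattern_block_def by measurable

lemma pattern_block_Suc:
  "pattern_block ix (Suc m) = pattern_block ix m \<inter> ((shift ^^ m) -` P (ix m) \<inter> space M)"
  by (auto simp: pattern_block_def less_Suc_eq)

lemma pattern_block_prefix_eq:
  assumes ix: "\<forall>k\<le>m. ix k \<in> patterns d"
    and s: "s \<in> pattern_block ix (Suc m)" "s \<in> switching"
    and t: "t \<in> pattern_block ix (Suc m)" "t \<in> switching" and "i \<le> m"
  shows "t i = s i"
proof -
  have "(shift ^^ i) s \<in> P (ix i)" "(shift ^^ i) t \<in> P (ix i)"
    using s(1) t(1) \<open>i \<le> m\<close> by (auto simp: pattern_block_def)
  then have "(shift ^^ i) t 0 = (shift ^^ i) s 0"
    using head_eq_if_same_ordinal_set ix \<open>i \<le> m\<close> funpow_shift_in_switching s(2) t(2) by blast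
  then show ?thesis by (simp add: funpow_shift_apply)
qed

lemma pattern_block_of_prefix:
  assumes ix: "\<forall>k\<le>m. ix k \<in> patterns d"
    and s: "s \<in> pattern_block ix (Suc m)" "s \<in> switching" and t: "t \<in> switching"
    and prefix: "\<forall>i<m. s i = t i" and last: "(shift ^^ m) t \<in> P (ix m)"
  shows "t \<in> pattern_block ix (Suc m)"
proof -
  have sP: "(shift ^^ k) s \<in> P (ix k)" if "k \<le> m" for k
    using s(1) that by (auto simp: pattern_block_def)
  have space: "(shift ^^ k) t \<in> space M" for k
    using t measurable_space[OF measurable_funpow_shift] by (auto simp: switching_iff)
  have "same_shift_order d ((shift ^^ m) s) ((shift ^^ m) t)"
    using ordinal_set_iff_same_shift_order[OF lexicographic _ sP[of m] space] ix last by auto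
  then have "same_shift_order d ((shift ^^ k) s) ((shift ^^ k) t)" if "k \<le> m" for k
    using same_shift_order_funpow_shift[OF _ _ _ _ prefix _ that] s(2) t switching_binary
    by (simp add: switching_iff)
  then have "(shift ^^ k) t \<in> P (ix k)" if "k \<le> m" for k
    using ordinal_set_iff_same_shift_order[OF lexicographic _ sP[OF that] space] ix that by auto
  then show ?thesis using t by (auto simp: pattern_block_def switching_iff)
qed

lemma pattern_block_Int_switching_eq:
  assumes ix: "\<forall>k\<le>m. ix k \<in> patterns d"
    and s: "s \<in> pattern_block ix (Suc m)" "s \<in> switching" and E: "E \<subseteq> P (ix m)"
  shows "pattern_block ix m \<inter> ((shift ^^ m) -` E \<inter> space M) \<inter> switching =
    cylinder 1 s (Suc m) \<inter> ((shift ^^ m) -` (E \<inter> switching) \<inter> space M)"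
proof -
  have "t \<in> pattern_block ix m \<inter> ((shift ^^ m) -` E \<inter> space M) \<longleftrightarrow>
      t \<in> pattern_block ix (Suc m) \<and> (shift ^^ m) t \<in> E" for t
    using E by (auto simp: pattern_block_Suc)
  moreover have "t \<in> pattern_block ix (Suc m) \<longleftrightarrow> t \<in> cylinder 1 s (Suc m) \<and> (shift ^^ m) t \<in> P (ix m)"
    if "t \<in> switching" for t
    using pattern_block_prefix_eq[OF ix s _ that] pattern_block_of_prefix[OF ix s that]
      that switching_binary
    by (auto simp: cylinder_def pattern_block_def less_Suc_eq_le)
  moreover have "t \<in> switching \<longleftrightarrow> (shift ^^ m) t \<in> switching" if "t \<in> space M" for t
    using that funpow_shift_in_switching_iff by simp
  ultimately show ?thesis using E by (auto simp: cylinder_def space_eq)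
qed

lemma measure_pattern_block_Int:
  assumes ix: "\<forall>k\<le>m. ix k \<in> patterns d"
    and s: "s \<in> pattern_block ix (Suc m)" "s \<in> switching" and E: "E \<in> sets M" "E \<subseteq> P (ix m)"
  shows "measure M (pattern_block ix m \<inter> ((shift ^^ m) -` E \<inter> space M)) * p (s m) =
    measure M (cylinder 1 s (Suc m)) * measure M E"
proof -
  have "u 0 = s m" if "u \<in> E \<inter> switching" for u
  proof -
    have "(shift ^^ m) s \<in> P (ix m)" using s(1) by (simp add: pattern_block_def)
    then show ?thesis using head_eq_if_same_ordinal_set[of "ix m" u] ix that E(2)
        funpow_shift_in_switching[OF s(2)]
      by (auto simp: funpow_shift_apply)
  qed
  then have head: "cylinder 1 (\<lambda>_. s m) 1 \<inter> (E \<inter> switching) = E \<inter> switching"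
    using switching_binary by (auto simp: cylinder_def)
  have "pattern_block ix m \<inter> ((shift ^^ m) -` E \<inter> space M) \<in> sets M"
    using E(1) by measurable
  then have "measure M (pattern_block ix m \<inter> ((shift ^^ m) -` E \<inter> space M)) =
      measure M (cylinder 1 s (Suc m) \<inter> ((shift ^^ m) -` (E \<inter> switching) \<inter> space M))"
    using measure_Int_switching pattern_block_Int_switching_eq[OF ix s E(2)] by metis
  also have "\<dots> * p (s m) = measure M (cylinder 1 s (Suc m)) * measure M (cylinder 1 (\<lambda>_. s m) 1 \<inter> (E \<inter> switching))"
    using switching_binary[OF s(2)] E(1)
    by (intro measure_cylinder_Int_funpow_shift) (auto simp: seq_space_def)
  also have "\<dots> = measure M (cylinder 1 s (Suc m)) * measure M E"
    by (simp only: head measure_Int_switching[OF E(1)])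
  finally show ?thesis .
qed

lemma INT_funpow_shift_preimage_eq_pattern_block:
  "(\<Inter>k<Suc m. (shift ^^ k) -` P (ix k) \<inter> space M) = pattern_block ix (Suc m)"
  by (auto simp: pattern_block_def)

lemma pattern_block_Suc_Suc:
  "pattern_block ix (Suc (Suc m)) =
    pattern_block ix m \<inter> ((shift ^^ m) -` (P (ix m) \<inter> (shift -` P (ix (Suc m)) \<inter> space M)) \<inter> space M)"
  using measurable_space[OF measurable_funpow_shift]
  by (auto simp: pattern_block_def less_Suc_eq)

lemma divide_eq_divide_if_common_factor:
  fixes a b c g q r :: real
  assumes "b * q = c * r" "a * q = c * g" "0 < a" "0 < q"
  shows "b / a = r / g"
proof -
  have "g \<noteq> 0" using assms(2-4) by (metis mult_eq_0_iff mult_pos_pos order_less_irrefl)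
  moreover have "b * g * q = r * a * q" using assms(1,2) by (metis mult.assoc mult.commute)
  ultimately show ?thesis using assms(3,4) by (simp add: field_simps)
qed

lemma markov_property_ordinal_partition: "markov_property M (patterns d) P"
  unfolding markov_property_def
proof (intro allI impI)
  fix n :: nat and ix :: "nat \<Rightarrow> nat list"
  assume n: "1 \<le> n" and ix: "\<forall>k\<le>n. ix k \<in> patterns d"
    and pos: "0 < measure M (\<Inter>k<n. (shift ^^ k) -` P (ix k) \<inter> space M)"
  obtain m where m: "n = Suc m" using n by (cases n) auto
  define R where "R = P (ix m) \<inter> (shift -` P (ix n) \<inter> space M)"
  have ixm: "\<forall>k\<le>m. ix k \<in> patterns d" using ix m by simp
  have blocks: "(\<Inter>k<n. (shift ^^ k) -` P (ix k) \<inter> space M) = pattern_block ix n"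
    "(\<Inter>k\<le>n. (shift ^^ k) -` P (ix k) \<inter> space M) = pattern_block ix (Suc n)"
    unfolding m lessThan_Suc_atMost[symmetric] INT_funpow_shift_preimage_eq_pattern_block by simp_all
  have "0 < measure M (pattern_block ix n \<inter> switching)"
    using pos unfolding blocks measure_Int_switching[OF pattern_block_in_sets] .
  then obtain s where s: "s \<in> pattern_block ix (Suc m)" "s \<in> switching"
    using m by (metis measure_empty less_irrefl equals0I IntE)
  have "measure M (pattern_block ix (Suc n)) * p (s m) = measure M (cylinder 1 s (Suc m)) * measure M R"
    unfolding m pattern_block_Suc_Suc R_def
    by (rule measure_pattern_block_Int[OF ixm s]) auto
  moreover have "measure M (pattern_block ix n) * p (s m) =
      measure M (cylinder 1 s (Suc m)) * measure M (P (ix m))"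
    unfolding m pattern_block_Suc by (rule measure_pattern_block_Int[OF ixm s]) simp_all
  moreover have "0 < measure M (pattern_block ix n)" using pos unfolding blocks .
  moreover have "0 < p (s m)" using p_pos switching_binary[OF s(2)] by (simp add: seq_space_def)
  ultimately have "measure M (pattern_block ix (Suc n)) / measure M (pattern_block ix n) =
      measure M R / measure M (P (ix m))"
    by (rule divide_eq_divide_if_common_factor)
  then show "measure M (\<Inter>k\<le>n. (shift ^^ k) -` P (ix k) \<inter> space M) /
      measure M (\<Inter>k<n. (shift ^^ k) -` P (ix k) \<inter> space M) =
    measure M (P (ix (n - 1)) \<inter> (shift -` P (ix n) \<inter> space M)) / measure M (P (ix (n - 1)))"
    unfolding blocks R_def by (simp add: m)
qed

definition head_set :: "nat \<Rightarrow> (nat \<Rightarrow> nat) set" where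
  "head_set c = (\<Union>\<pi>\<in>{\<pi> \<in> patterns d. \<exists>u\<in>P \<pi> \<inter> switching. u 0 = c}. P \<pi>)"

lemma head_set_iff:
  assumes "t \<in> switching"
  shows "t \<in> head_set c \<longleftrightarrow> t 0 = c"
proof
  assume "t \<in> head_set c"
  then obtain \<pi> u where "\<pi> \<in> patterns d" "u \<in> P \<pi>" "u \<in> switching" "u 0 = c" "t \<in> P \<pi>"
    unfolding head_set_def by blast
  then show "t 0 = c" using head_eq_if_same_ordinal_set assms by metis
next
  assume "t 0 = c"
  obtain \<pi> where "\<pi> \<in> patterns d" "has_pattern (\<lambda>i. X ((shift ^^ (d - i)) t)) \<pi>"
    using pattern_exists by blast
  moreover have "t \<in> space M" using assms by (simp add: switching_iff)
  ultimately show "t \<in> head_set c"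
    unfolding head_set_def using assms \<open>t 0 = c\<close> by (auto simp: ordinal_set_def)
qed

definition pattern_events :: "(nat \<Rightarrow> nat) set set" where
  "pattern_events = sigma_sets (space M) {(shift ^^ n) -` P \<pi> \<inter> space M | n \<pi>. \<pi> \<in> patterns d}"

lemma sigma_algebra_pattern_events: "sigma_algebra (space M) pattern_events"
  unfolding pattern_events_def by (rule sigma_algebra_sigma_sets) auto

lemma pattern_events_subset_sets: "pattern_events \<subseteq> sets M"
  unfolding pattern_events_def by (rule sets.sigma_sets_subset) auto

lemma funpow_shift_preimage_head_set_in_pattern_events:
  "(shift ^^ i) -` head_set c \<inter> space M \<in> pattern_events"
proof -
  interpret E: sigma_algebra "space M" pattern_events by (rule sigma_algebra_pattern_events)
  have "(shift ^^ i) -` head_set c \<inter> space M =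
      (\<Union>\<pi>\<in>{\<pi> \<in> patterns d. \<exists>u\<in>P \<pi> \<inter> switching. u 0 = c}. (shift ^^ i) -` P \<pi> \<inter> space M)"
    unfolding head_set_def by auto
  also have "\<dots> \<in> pattern_events"
  proof (rule E.finite_UN)
    show "finite {\<pi> \<in> patterns d. \<exists>u\<in>P \<pi> \<inter> switching. u 0 = c}" using finite_patterns by simp
    fix \<pi> assume "\<pi> \<in> {\<pi> \<in> patterns d. \<exists>u\<in>P \<pi> \<inter> switching. u 0 = c}"
    then show "(shift ^^ i) -` P \<pi> \<inter> space M \<in> pattern_events"
      unfolding pattern_events_def by (intro sigma_sets.Basic) blast
  qed
  finally show ?thesis .
qed

lemma cylinder_approx_by_pattern_events:
  "\<exists>A\<in>pattern_events. A - cylinder 1 a n \<subseteq> space M - switching \<and> cylinder 1 a n - A \<subseteq> space M - switching"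
proof -
  interpret E: sigma_algebra "space M" pattern_events by (rule sigma_algebra_pattern_events)
  define A where "A k = {t \<in> space M. \<forall>i<k. (shift ^^ i) t \<in> head_set (a i)}" for k
  have "A k \<in> pattern_events" for k
  proof (induction k)
    case (Suc k)
    have "A (Suc k) = A k \<inter> ((shift ^^ k) -` head_set (a k) \<inter> space M)"
      by (auto simp: A_def less_Suc_eq)
    then show ?case using Suc funpow_shift_preimage_head_set_in_pattern_events by auto
  qed (simp add: A_def)
  moreover have "t \<in> A n \<longleftrightarrow> t \<in> cylinder 1 a n" if "t \<in> switching" for t
    using that head_set_iff funpow_shift_in_switching
    by (auto simp: A_def cylinder_def switching_iff space_eq funpow_shift_apply)
  moreover have "A n \<subseteq> space M" "cylinder 1 a n \<subseteq> space M"
    by (auto simp: A_def cylinder_def space_eq)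
  ultimately show ?thesis by (intro bexI[of _ "A n"]) blast+
qed

lemma generating_ordinal_partition: "generating M (patterns d) P"
  unfolding generating_def pattern_events_def[symmetric]
proof
  fix B assume B: "B \<in> sets M"
  then have "B \<in> sigma_sets (space M) {cylinder 1 a n | a n. True}" by (simp add: sets_eq space_eq)
  moreover have "\<exists>A\<in>pattern_events. A - g \<subseteq> space M - switching \<and> g - A \<subseteq> space M - switching"
    if "g \<in> {cylinder 1 a n | a n. True}" for g
    using that cylinder_approx_by_pattern_events by blast
  ultimately have "\<exists>A\<in>pattern_events. A - B \<subseteq> space M - switching \<and> B - A \<subseteq> space M - switching"
    by (rule sigma_sets_approximation[OF sigma_algebra_pattern_events])
  then obtain A where A: "A \<in> pattern_events" "A - B \<subseteq> space M - switching" "B - A \<subseteq> space M - switching"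
    by blast
  then have "(A - B) \<union> (B - A) \<in> sets M" using B pattern_events_subset_sets by blast
  then have "(A - B) \<union> (B - A) \<in> null_sets M"
    by (rule null_sets_subset[OF null_sets_not_switching]) (use A(2,3) in blast)
  then show "\<exists>A\<in>pattern_events. measure M ((A - B) \<union> (B - A)) = 0"
    using A(1) by (intro bexI[of _ A] measure_eq_0_null_sets)
qed

end

theorem lemma2:
  fixes Q :: "nat \<Rightarrow> nat \<Rightarrow> real" and p :: "nat \<Rightarrow> real"
    and M :: "(nat \<Rightarrow> nat) measure" and X :: "(nat \<Rightarrow> nat) \<Rightarrow> real" and d :: nat
  assumes "markov_shift 1 Q p M"
    and "ergodic_shift M"
    and "X \<in> borel_measurable M"
    and "lexicographic_like M X"
    and "1 \<le> d"
  shows "generating M (patterns d) (ordinal_set M X d) \<and>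
         markov_property M (patterns d) (ordinal_set M X d)"
proof -
  interpret lexicographic_ordinal_partition Q p M X d
    using assms by unfold_locales auto
  show ?thesis using generating_ordinal_partition markov_property_ordinal_partition by blast
qed

end
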